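(* No graph in $\mathfrak D_4$ contains an induced cube, i.e. an induced subgraph isomorphic to the graph obtained from $K_{4,4}$ by deleting a perfect matching.
   Context: $\mathfrak D_4$ is the class of (finite) maximal triangle-free graphs satisfying property $\mathscr{D}_4$. Maximal triangle-free: no triangle, and adding any new edge creates a triangle. Property $\mathscr{D}_k$: for every $m\in\{1,\dots,k\}$ and every sequence $x_1,\dots,x_{3m}$ of (not necessarily distinct) vertices there is a vertex $y$ with $|\{i\in[3m]: x_iy\in E(G)\}|\ge m+1$. *)

theory Defs
  imports Main
begin

definition simple_graph :: "'a set \<Rightarrow> ('a \<Rightarrow> 'a \<Rightarrow> bool) \<Rightarrow> bool" where
  "simple_graph V E \<longleftrightarrow> finite V \<and> (\<forall>u v. E u v \<longrightarrow> u \<in> V \<and> v \<in> V) \<and>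
     (\<forall>u v. E u v \<longrightarrow> E v u) \<and> (\<forall>u. \<not> E u u)"

definition triangle_free :: "'a set \<Rightarrow> ('a \<Rightarrow> 'a \<Rightarrow> bool) \<Rightarrow> bool" where
  "triangle_free V E \<longleftrightarrow> \<not> (\<exists>a\<in>V. \<exists>b\<in>V. \<exists>c\<in>V. E a b \<and> E b c \<and> E a c)"

text \<open>Maximal triangle-free: triangle-free, and adding any new edge uv
(u, v distinct non-adjacent vertices) creates a triangle, i.e. u and v
have a common neighbour.\<close>

definition maximal_triangle_free :: "'a set \<Rightarrow> ('a \<Rightarrow> 'a \<Rightarrow> bool) \<Rightarrow> bool" where
  "maximal_triangle_free V E \<longleftrightarrow> triangle_free V E \<and>
     (\<forall>u\<in>V. \<forall>v\<in>V. u \<noteq> v \<and> \<not> E u v \<longrightarrow> (\<exists>w\<in>V. E u w \<and> E w v))"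

text \<open>Property D_k: for every m in {1..k} and every sequence x_1..x_{3m}
(indexed here by 0..3m-1) of not necessarily distinct vertices, some vertex y
is adjacent to at least m+1 of the x_i (counted with multiplicity of index).\<close>

definition property_D :: "nat \<Rightarrow> 'a set \<Rightarrow> ('a \<Rightarrow> 'a \<Rightarrow> bool) \<Rightarrow> bool" where
  "property_D k V E \<longleftrightarrow>
     (\<forall>m\<in>{1..k}. \<forall>x :: nat \<Rightarrow> 'a. (\<forall>i<3*m. x i \<in> V) \<longrightarrow>
        (\<exists>y\<in>V. card {i. i < 3*m \<and> E (x i) y} \<ge> m + 1))"

definition in_frak_D4 :: "'a set \<Rightarrow> ('a \<Rightarrow> 'a \<Rightarrow> bool) \<Rightarrow> bool" where
  "in_frak_D4 V E \<longleftrightarrow> simple_graph V E \<and> maximal_triangle_free V E \<and> property_D 4 V E"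

text \<open>The cube: K_{4,4} minus a perfect matching. Vertices (s,i) with s::bool
(side) and i<4; (s,i) ~ (t,j) iff s \<noteq> t and i \<noteq> j.\<close>

definition cube_vertices :: "(bool \<times> nat) set" where
  "cube_vertices = UNIV \<times> {0..<4}"

definition cube_adj :: "bool \<times> nat \<Rightarrow> bool \<times> nat \<Rightarrow> bool" where
  "cube_adj p q \<longleftrightarrow> fst p \<noteq> fst q \<and> snd p \<noteq> snd q"

definition has_induced_cube :: "'a set \<Rightarrow> ('a \<Rightarrow> 'a \<Rightarrow> bool) \<Rightarrow> bool" where
  "has_induced_cube V E \<longleftrightarrow> (\<exists>f. inj_on f cube_vertices \<and> f ` cube_vertices \<subseteq> V \<and>
     (\<forall>p\<in>cube_vertices. \<forall>q\<in>cube_vertices. E (f p) (f q) \<longleftrightarrow> cube_adj p q))"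

end

theory Submission imports Defs begin

text \<open>Let \<open>a\<^sub>i, b\<^sub>i\<close> (\<open>i < 4\<close>) be the two sides of an induced cube, so \<open>a\<^sub>i \<sim> b\<^sub>j\<close> iff \<open>i \<noteq> j\<close>.
By maximality \<open>a\<^sub>i\<close> and \<open>b\<^sub>i\<close> have a common neighbour \<open>c\<^sub>i\<close>. In a triangle-free graph every
neighbourhood is independent, so the vertex given by \<open>\<D>\<^sub>2\<close> for \<open>a\<^sub>i, b\<^sub>j, c\<^sub>j, a\<^sub>j, b\<^sub>i, c\<^sub>i\<close>, which
form a hexagon, sees one of its two alternating triples; either way we obtain adjacent
vertices \<open>p \<sim> a\<^sub>i, b\<^sub>i\<close> and \<open>q \<sim> a\<^sub>j, b\<^sub>j\<close>. Doing this for the pairs \<open>(0,1)\<close> and \<open>(2,3)\<close> yields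
twelve vertices whose induced graph has independence number 4, so no vertex sees five
of them, contradicting \<open>\<D>\<^sub>4\<close>.\<close>

lemma simple_graph_sym: "simple_graph V E \<Longrightarrow> E u v \<Longrightarrow> E v u"
  unfolding simple_graph_def by blast

lemma triangle_free_neighbours_nonadjacent:
  assumes "simple_graph V E" "triangle_free V E" "E u v"
  shows "\<not> (E u y \<and> E v y)"
proof
  assume "E u y \<and> E v y"
  moreover have "u \<in> V" "v \<in> V" "y \<in> V"
    using assms(1,3) \<open>E u y \<and> E v y\<close> unfolding simple_graph_def by blast+
  ultimately show False
    using assms(2,3) unfolding triangle_free_def by blast
qed

lemma property_D_neighbour_count:
  assumes "property_D k V E" "1 \<le> m" "m \<le> k" "set xs \<subseteq> V" "length xs = 3 * m"
  obtains y where "y \<in> V" "m < length (filter (\<lambda>x. E x y) xs)"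
proof -
  have "\<forall>i<3 * m. xs ! i \<in> V"
    using assms(5) by (auto intro: nth_mem[THEN subsetD[OF assms(4)]])
  moreover have "m \<in> {1..k}"
    using assms(2,3) by simp
  ultimately obtain y where "y \<in> V" "m + 1 \<le> card {i. i < 3 * m \<and> E (xs ! i) y}"
    using assms(1) unfolding property_D_def by blast
  then show thesis
    using that assms(5) by (simp add: length_filter_conv_card)
qed

lemma hexagon_independent_triple:
  assumes "\<not> (P v\<^sub>0 \<and> P v\<^sub>1)" "\<not> (P v\<^sub>1 \<and> P v\<^sub>2)" "\<not> (P v\<^sub>2 \<and> P v\<^sub>3)"
    "\<not> (P v\<^sub>3 \<and> P v\<^sub>4)" "\<not> (P v\<^sub>4 \<and> P v\<^sub>5)" "\<not> (P v\<^sub>5 \<and> P v\<^sub>0)"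
    "2 < length (filter P [v\<^sub>0, v\<^sub>1, v\<^sub>2, v\<^sub>3, v\<^sub>4, v\<^sub>5])"
  shows "(P v\<^sub>0 \<and> P v\<^sub>2 \<and> P v\<^sub>4) \<or> (P v\<^sub>1 \<and> P v\<^sub>3 \<and> P v\<^sub>5)"
  using assms by (auto split: if_splits)

text \<open>An independent set meets the cube either within one side or in a single pair
\<open>{a\<^sub>i, b\<^sub>i}\<close>, and contains at most one of \<open>p, q\<close> and one of \<open>r, s\<close>. Three vertices on one side
leave only one index free, whereas a vertex from \<open>{p, q}\<close> and one from \<open>{r, s}\<close> need two.\<close>

lemma linked_cube_independence:
  fixes a b :: "nat \<Rightarrow> 'a"
  assumes cube: "\<And>i j. i < 4 \<Longrightarrow> j < 4 \<Longrightarrow> i \<noteq> j \<Longrightarrow> \<not> (P (a i) \<and> P (b j))"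
    and links: "\<not> (P p \<and> P (a 0))" "\<not> (P p \<and> P (b 0))" "\<not> (P q \<and> P (a 1))"
      "\<not> (P q \<and> P (b 1))" "\<not> (P p \<and> P q)"
      "\<not> (P r \<and> P (a 2))" "\<not> (P r \<and> P (b 2))" "\<not> (P s \<and> P (a 3))"
      "\<not> (P s \<and> P (b 3))" "\<not> (P r \<and> P s)"
  shows "length (filter P [a 0, a 1, a 2, a 3, b 0, b 1, b 2, b 3, p, q, r, s]) \<le> 4"
proof -
  have "\<forall>(i, j) \<in> {(0,1), (0,2), (0,3), (1,0), (1,2), (1,3), (2,0), (2,1), (2,3), (3,0), (3,1), (3,2)}.
      \<not> (P (a i) \<and> P (b j))"
    using cube[of 0] cube[of 1] cube[of 2] cube[of 3] by simp
  then show ?thesis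
    using links by simp blast
qed

lemma crossed_pairs_linked:
  assumes G: "simple_graph V E" "maximal_triangle_free V E" "property_D k V E" "2 \<le> k"
    and adj: "E a\<^sub>i b\<^sub>j" "E a\<^sub>j b\<^sub>i" "\<not> E a\<^sub>i b\<^sub>i" "\<not> E a\<^sub>j b\<^sub>j" "a\<^sub>i \<noteq> b\<^sub>i" "a\<^sub>j \<noteq> b\<^sub>j"
  obtains p q where "E p a\<^sub>i" "E p b\<^sub>i" "E q a\<^sub>j" "E q b\<^sub>j" "E p q"
proof -
  have tf: "triangle_free V E"
    using G(2) unfolding maximal_triangle_free_def by blast
  have V: "a\<^sub>i \<in> V" "a\<^sub>j \<in> V" "b\<^sub>i \<in> V" "b\<^sub>j \<in> V"
    using G(1) adj(1,2) unfolding simple_graph_def by blast+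
  obtain c\<^sub>i where c\<^sub>i: "c\<^sub>i \<in> V" "E a\<^sub>i c\<^sub>i" "E c\<^sub>i b\<^sub>i"
    using G(2) V adj unfolding maximal_triangle_free_def by blast
  obtain c\<^sub>j where c\<^sub>j: "c\<^sub>j \<in> V" "E a\<^sub>j c\<^sub>j" "E c\<^sub>j b\<^sub>j"
    using G(2) V adj unfolding maximal_triangle_free_def by blast
  obtain y where y: "2 < length (filter (\<lambda>x. E x y) [a\<^sub>i, b\<^sub>j, c\<^sub>j, a\<^sub>j, b\<^sub>i, c\<^sub>i])"
    using property_D_neighbour_count[OF G(3), of 2 "[a\<^sub>i, b\<^sub>j, c\<^sub>j, a\<^sub>j, b\<^sub>i, c\<^sub>i]"] G(4) V c\<^sub>i c\<^sub>j
    by auto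
  note nonadj = triangle_free_neighbours_nonadjacent[OF G(1) tf]
  have "(E a\<^sub>i y \<and> E c\<^sub>j y \<and> E b\<^sub>i y) \<or> (E b\<^sub>j y \<and> E a\<^sub>j y \<and> E c\<^sub>i y)"
    by (rule hexagon_independent_triple[OF _ _ _ _ _ _ y])
      (use nonadj[OF adj(1)] nonadj[OF c\<^sub>j(3)] nonadj[OF c\<^sub>j(2)] nonadj[OF adj(2)]
        nonadj[OF c\<^sub>i(3)] nonadj[OF c\<^sub>i(2)] in blast)+
  then show thesis
    using that c\<^sub>i c\<^sub>j simple_graph_sym[OF G(1)] by blast
qed

lemma has_induced_cube_sides:
  assumes "has_induced_cube V E"
  obtains a b :: "nat \<Rightarrow> 'a" where
    "\<And>i. i < 4 \<Longrightarrow> a i \<noteq> b i" "\<And>i j. i < 4 \<Longrightarrow> j < 4 \<Longrightarrow> E (a i) (b j) \<longleftrightarrow> i \<noteq> j"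
proof -
  obtain f where f: "inj_on f cube_vertices"
    "\<forall>p\<in>cube_vertices. \<forall>q\<in>cube_vertices. E (f p) (f q) \<longleftrightarrow> cube_adj p q"
    using assms unfolding has_induced_cube_def by (elim exE conjE)
  have cv: "(s, i) \<in> cube_vertices" if "i < 4" for s i
    using that by (simp add: cube_vertices_def)
  show thesis
  proof (rule that[of "\<lambda>i. f (True, i)" "\<lambda>i. f (False, i)"])
    show "f (True, i) \<noteq> f (False, i)" if "i < 4" for i
      using inj_on_eq_iff[OF f(1) cv[OF that] cv[OF that]] by simp
    show "E (f (True, i)) (f (False, j)) \<longleftrightarrow> i \<noteq> j" if "i < 4" "j < 4" for i j
      using f(2) cv[OF that(1)] cv[OF that(2)] by (simp add: cube_adj_def)
  qed
qed

theorem mainTheorem11: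
  fixes V :: "'a set" and E :: "'a \<Rightarrow> 'a \<Rightarrow> bool"
  assumes "in_frak_D4 V E"
  shows "\<not> has_induced_cube V E"
proof
  assume cube: "has_induced_cube V E"
  obtain a b :: "nat \<Rightarrow> 'a"
    where ab: "\<And>i. i < 4 \<Longrightarrow> a i \<noteq> b i" "\<And>i j. i < 4 \<Longrightarrow> j < 4 \<Longrightarrow> E (a i) (b j) \<longleftrightarrow> i \<noteq> j"
    using has_induced_cube_sides[OF cube] by blast
  have G: "simple_graph V E" "maximal_triangle_free V E" "property_D 4 V E"
    using assms unfolding in_frak_D4_def by blast+
  then have tf: "triangle_free V E"
    unfolding maximal_triangle_free_def by blast
  obtain p q where pq: "E p (a 0)" "E p (b 0)" "E q (a 1)" "E q (b 1)" "E p q"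
    by (rule crossed_pairs_linked[OF G, of "a 0" "b 1" "a 1" "b 0"]) (use ab in auto)
  obtain r s where rs: "E r (a 2)" "E r (b 2)" "E s (a 3)" "E s (b 3)" "E r s"
    by (rule crossed_pairs_linked[OF G, of "a 2" "b 3" "a 3" "b 2"]) (use ab in auto)
  let ?xs = "[a 0, a 1, a 2, a 3, b 0, b 1, b 2, b 3, p, q, r, s]"
  have "set ?xs \<subseteq> V"
    using pq rs G(1) unfolding simple_graph_def by auto
  then obtain y where y: "4 < length (filter (\<lambda>x. E x y) ?xs)"
    using property_D_neighbour_count[OF G(3), of 4 ?xs] by auto
  note nonadj = triangle_free_neighbours_nonadjacent[OF G(1) tf]
  have "length (filter (\<lambda>x. E x y) ?xs) \<le> 4"
  proof (rule linked_cube_independence)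
    show "\<not> (E (a i) y \<and> E (b j) y)" if "i < 4" "j < 4" "i \<noteq> j" for i j
      using nonadj ab(2)[OF that(1,2)] that(3) by blast
  qed (use nonadj[OF pq(1)] nonadj[OF pq(2)] nonadj[OF pq(3)] nonadj[OF pq(4)] nonadj[OF pq(5)]
      nonadj[OF rs(1)] nonadj[OF rs(2)] nonadj[OF rs(3)] nonadj[OF rs(4)] nonadj[OF rs(5)] in blast)+
  with y show False by simp
qed

end
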